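(* Let $C>0$, $\epsilon\in(0,1)$ and set $K:=\frac{C\cos\left(\epsilon\frac{\pi}{2}\right)}{3^{\epsilon/2}}$. There exists $k\in(0,1)$ depending on $C$ and $\epsilon$ such that $$k\exp\left(K|z|^\epsilon\right)\le\left|e^{z}\right|\le\exp(|z|)$$ for all $z\in U_C^\epsilon$.
   Context: $H(0)=\{z\in\mathbb{C}:\operatorname{Re}z>0\}$, and $U_C^\epsilon:=\phi_C^\epsilon(H(0))$ where $\phi_C^\epsilon(z)=z+C(1+z)^\epsilon$ with the principal branch of the power function. *)

theory Defs
  imports "HOL-Analysis.Analysis"
begin

definition right_half_plane :: "complex set" where
  "right_half_plane = {z. Re z > 0}"

text \<open>phi_C^eps(z) = z + C (1+z)^eps with the principal branch (powr on complex uses Ln).\<close>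
definition phi_map :: "real \<Rightarrow> real \<Rightarrow> complex \<Rightarrow> complex" where
  "phi_map C \<epsilon> z = z + of_real C * (1 + z) powr (of_real \<epsilon>)"

definition U_set :: "real \<Rightarrow> real \<Rightarrow> complex set" where
  "U_set C \<epsilon> = phi_map C \<epsilon> ` right_half_plane"

end

theory Submission
  imports Defs "HOL-Real_Asymp.Real_Asymp"
begin

text \<open>
  Write \<open>z = w + C u\<^sup>\<epsilon>\<close> with \<open>u = 1 + w\<close> and \<open>t = |u| \<ge> 1\<close>. Since \<open>|arg u| < \<pi>/2\<close>, the term
  \<open>C u\<^sup>\<epsilon>\<close> contributes at least \<open>C cos(\<epsilon>\<pi>/2) t\<^sup>\<epsilon>\<close> to \<open>Re z\<close>, while \<open>|z| \<le> t + 1 + C t\<^sup>\<epsilon>\<close>.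
  For large \<open>t\<close> the latter is at most \<open>3t/2 \<le> \<surd>3 t\<close>, so \<open>K|z|\<^sup>\<epsilon> \<le> Re z\<close>; for small \<open>t\<close> the
  modulus \<open>|z|\<close> stays bounded. Hence \<open>Re z \<ge> K|z|\<^sup>\<epsilon> - M\<close> for a constant \<open>M\<close>, and \<open>k = e\<^sup>-\<^sup>M\<close>
  (capped below 1) works; the upper bound is just \<open>Re z \<le> |z|\<close>.
\<close>

lemma cos_mult_pi_half_pos:
  fixes \<epsilon> :: real
  assumes "0 \<le> \<epsilon>" "\<epsilon> < 1"
  shows "cos (\<epsilon> * pi / 2) > 0"
proof -
  have "0 \<le> \<epsilon> * pi" "\<epsilon> * pi < 1 * pi"
    using assms by (auto intro: mult_strict_right_mono)
  then show ?thesis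
    using pi_gt_zero by (intro cos_gt_zero_pi) linarith+
qed

lemma Re_powr_ge_norm_powr_cos:
  fixes u :: complex and \<epsilon> :: real
  assumes "Re u > 0" "0 \<le> \<epsilon>" "\<epsilon> \<le> 1"
  shows "cmod u powr \<epsilon> * cos (\<epsilon> * pi / 2) \<le> Re (u powr of_real \<epsilon>)"
proof -
  have "u \<noteq> 0"
    using assms(1) by auto
  then have Re_eq: "Re (u powr of_real \<epsilon>) = cmod u powr \<epsilon> * cos (\<epsilon> * Im (Ln u))"
    by (simp add: powr_def Re_exp)
  have "\<bar>Im (Ln u)\<bar> \<le> pi / 2"
    using assms(1) Re_Ln_pos_lt[OF \<open>u \<noteq> 0\<close>] by auto
  then have "\<epsilon> * \<bar>Im (Ln u)\<bar> \<le> \<epsilon> * (pi / 2)"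
    using assms(2) by (rule mult_left_mono)
  then have "\<bar>\<epsilon> * Im (Ln u)\<bar> \<le> \<epsilon> * pi / 2"
    using assms(2) by (simp add: abs_mult)
  then have "cos (\<epsilon> * pi / 2) \<le> cos \<bar>\<epsilon> * Im (Ln u)\<bar>"
    using assms(2,3) by (intro cos_monotone_0_pi_le) auto
  then show ?thesis
    unfolding Re_eq by (intro mult_left_mono) auto
qed

lemma U_set_Re_norm_bounds:
  fixes C \<epsilon> :: real
  assumes "z \<in> U_set C \<epsilon>" "C \<ge> 0" "0 \<le> \<epsilon>" "\<epsilon> \<le> 1"
  obtains t where "t \<ge> 1"
    and "C * cos (\<epsilon> * pi / 2) * t powr \<epsilon> \<le> Re z"
    and "cmod z \<le> t + 1 + C * t powr \<epsilon>"
proof -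
  obtain w where "Re w > 0" and z: "z = w + of_real C * (1 + w) powr of_real \<epsilon>"
    using assms(1) unfolding U_set_def phi_map_def right_half_plane_def by auto
  define t where "t = cmod (1 + w)"
  have "Re (1 + w) > 0"
    using \<open>Re w > 0\<close> by simp
  have "t \<ge> 1"
    using \<open>Re w > 0\<close> complex_Re_le_cmod[of "1 + w"] unfolding t_def by simp
  moreover have "C * cos (\<epsilon> * pi / 2) * t powr \<epsilon> \<le> Re z"
  proof -
    have "C * (t powr \<epsilon> * cos (\<epsilon> * pi / 2)) \<le> C * Re ((1 + w) powr of_real \<epsilon>)"
      using Re_powr_ge_norm_powr_cos[OF \<open>Re (1 + w) > 0\<close> assms(3,4)] assms(2)
      unfolding t_def by (intro mult_left_mono)
    then show ?thesis
      using \<open>Re w > 0\<close> unfolding z by (simp add: algebra_simps)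
  qed
  moreover have "cmod z \<le> t + 1 + C * t powr \<epsilon>"
  proof -
    have "cmod z \<le> cmod w + cmod (of_real C * (1 + w) powr of_real \<epsilon>)"
      unfolding z by (rule norm_triangle_ineq)
    also have "cmod (of_real C * (1 + w) powr of_real \<epsilon>) = C * t powr \<epsilon>"
      using assms(2) unfolding t_def by (simp add: norm_mult norm_powr_real_powr')
    also have "cmod w \<le> t + 1"
      using norm_triangle_ineq4[of "1 + w" 1] unfolding t_def by simp
    finally show ?thesis
      by simp
  qed
  ultimately show ?thesis
    by (rule that)
qed

lemma powr_le_sqrt3_powr_plus_const:
  fixes C \<epsilon> :: real
  assumes "C \<ge> 0" "0 < \<epsilon>" "\<epsilon> < 1"
  obtains M where "\<And>t r. 1 \<le> t \<Longrightarrow> 0 \<le> r \<Longrightarrow> r \<le> t + 1 + C * t powr \<epsilon> \<Longrightarrow>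
           r powr \<epsilon> \<le> 3 powr (\<epsilon> / 2) * t powr \<epsilon> + M"
proof -
  have "eventually (\<lambda>t. 1 + C * t powr \<epsilon> \<le> t / 2) at_top"
    using assms by real_asymp
  then obtain T where T: "\<And>t. t \<ge> T \<Longrightarrow> 1 + C * t powr \<epsilon> \<le> t / 2"
    by (auto simp: eventually_at_top_linorder)
  define M where "M = (T + 1 + C * T powr \<epsilon>) powr \<epsilon>"
  have "M \<ge> 0"
    unfolding M_def by simp
  have "r powr \<epsilon> \<le> 3 powr (\<epsilon> / 2) * t powr \<epsilon> + M"
    if "1 \<le> t" "0 \<le> r" and r: "r \<le> t + 1 + C * t powr \<epsilon>" for t r
  proof (cases "t \<ge> T")
    case True
    have "3 / 2 \<le> sqrt 3"
      by (rule real_le_rsqrt) (simp add: power2_eq_square)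
    then have "3 / 2 * t \<le> sqrt 3 * t"
      using \<open>1 \<le> t\<close> by (intro mult_right_mono) auto
    then have "r \<le> sqrt 3 * t"
      using r T[OF True] by simp
    then have "r powr \<epsilon> \<le> (sqrt 3 * t) powr \<epsilon>"
      using assms(2) \<open>0 \<le> r\<close> by (intro powr_mono2) auto
    also have "\<dots> = 3 powr (\<epsilon> / 2) * t powr \<epsilon>"
      using \<open>1 \<le> t\<close> by (simp add: powr_mult powr_half_sqrt[symmetric] powr_powr)
    finally show ?thesis
      using \<open>M \<ge> 0\<close> by simp
  next
    case False
    then have "C * t powr \<epsilon> \<le> C * T powr \<epsilon>"
      using \<open>1 \<le> t\<close> assms(1,2) by (intro mult_left_mono powr_mono2) auto
    then have "r \<le> T + 1 + C * T powr \<epsilon>"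
      using r False by simp
    then have "r powr \<epsilon> \<le> M"
      unfolding M_def using assms(2) \<open>0 \<le> r\<close> by (intro powr_mono2) auto
    moreover have "0 \<le> 3 powr (\<epsilon> / 2) * t powr \<epsilon>"
      by simp
    ultimately show ?thesis
      by linarith
  qed
  then show ?thesis
    by (rule that)
qed

theorem lemma3p3:
  fixes C \<epsilon> :: real
  assumes "C > 0" and "0 < \<epsilon>" and "\<epsilon> < 1"
  defines "K \<equiv> C * cos (\<epsilon> * pi / 2) / 3 powr (\<epsilon> / 2)"
  shows "\<exists>k::real. 0 < k \<and> k < 1 \<and>
           (\<forall>z \<in> U_set C \<epsilon>.
              k * exp (K * cmod z powr \<epsilon>) \<le> cmod (exp z) \<and> cmod (exp z) \<le> exp (cmod z))"
proof -
  have "K \<ge> 0"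
    unfolding K_def using assms cos_mult_pi_half_pos[of \<epsilon>] by simp
  obtain M where M: "\<And>t r. 1 \<le> t \<Longrightarrow> 0 \<le> r \<Longrightarrow> r \<le> t + 1 + C * t powr \<epsilon> \<Longrightarrow>
      r powr \<epsilon> \<le> 3 powr (\<epsilon> / 2) * t powr \<epsilon> + M"
    using powr_le_sqrt3_powr_plus_const[of C \<epsilon>] assms(1-3) by auto
  define k where "k = min (1 / 2) (exp (- K * M))"
  have "k * exp (K * cmod z powr \<epsilon>) \<le> cmod (exp z)" if z: "z \<in> U_set C \<epsilon>" for z
  proof -
    obtain t where "t \<ge> 1" and Re_z: "C * cos (\<epsilon> * pi / 2) * t powr \<epsilon> \<le> Re z"
      and "cmod z \<le> t + 1 + C * t powr \<epsilon>"
      using U_set_Re_norm_bounds[OF z] assms(1-3) by auto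
    then have "cmod z powr \<epsilon> \<le> 3 powr (\<epsilon> / 2) * t powr \<epsilon> + M"
      by (intro M) auto
    then have "K * cmod z powr \<epsilon> \<le> K * (3 powr (\<epsilon> / 2) * t powr \<epsilon> + M)"
      using \<open>K \<ge> 0\<close> by (rule mult_left_mono)
    also have "\<dots> \<le> Re z + K * M"
      using Re_z unfolding K_def by (simp add: distrib_left)
    finally have Re_z_bound: "K * cmod z powr \<epsilon> - K * M \<le> Re z"
      by simp
    have "k * exp (K * cmod z powr \<epsilon>) \<le> exp (- K * M) * exp (K * cmod z powr \<epsilon>)"
      unfolding k_def by (intro mult_right_mono) auto
    also have "\<dots> = exp (K * cmod z powr \<epsilon> - K * M)"
      by (simp add: exp_add[symmetric])
    also have "\<dots> \<le> cmod (exp z)"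
      using Re_z_bound by simp
    finally show ?thesis .
  qed
  moreover have "cmod (exp z) \<le> exp (cmod z)" for z
    using complex_Re_le_cmod[of z] by simp
  moreover have "0 < k" "k < 1"
    unfolding k_def by auto
  ultimately show ?thesis
    by blast
qed

end
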